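(* The part Dirichlet forms on $G$ coincide: $(\mathcal{E}^{(s)}_G,\mathcal{F}^{(s)}_G)=(\frac12\mathbf{D}_G,H^1_0(G))$. That is, $\mathcal{F}^{(s)}_G=H^1_0(G)$, where $H^1_0(G)=\{u\in H^1(\mathbf{R}): u=0 \text{ on } F\}$, and the two forms agree on this space.
   Context: Let $m$ be Lebesgue measure on $\mathbf{R}$, and let $(\mathcal{E},\mathcal{F})=(\frac12\mathbf{D},H^1(\mathbf{R}))$ with $\mathbf{D}(u,v)=\int u'v'\,dx$ be the Dirichlet form of one-dimensional Brownian motion on $L^2(\mathbf{R})$. Let $s$ be a strictly increasing absolutely continuous function on $\mathbf{R}$ with $s'\in\{0,1\}$ a.e. Define $\mathcal{F}^{(s)}=\{u\in L^2(\mathbf{R}): u\ll s,\ \int(du/ds)^2ds<\infty\}$ and $\mathcal{E}^{(s)}(u,v)=\frac12\int\frac{du}{ds}\frac{dv}{ds}ds$. Let $G=\{s'=1\}$ (so $ds=1_G\,dx$) and $F=\mathbf{R}\setminus G$. Assume $G$ is open, $m(F)>0$, and $F$ has no isolated points. The part form of $\mathcal{E}^{(s)}$ on $G$ is $\mathcal{F}^{(s)}_G=\{u\in\mathcal{F}^{(s)}: u=0 \text{ on } F\}$ with $\mathcal{E}^{(s)}_G=\mathcal{E}^{(s)}$ on it. Here $u=0$ on $F$ refers to the continuous version of $u$. Similarly $\frac12\mathbf{D}_G$ denotes $\frac12\mathbf{D}$ restricted to $H^1_0(G)$. *)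

theory Defs
  imports "HOL-Analysis.Analysis"
begin

text \<open>Functions are represented pointwise by real functions; all members of
  the spaces below are automatically continuous (they are indefinite integrals),
  so pointwise statements refer to the continuous version.\<close>

definition L2 :: "(real \<Rightarrow> real) \<Rightarrow> bool" where
  "L2 u \<longleftrightarrow> u \<in> borel_measurable lebesgue \<and> integrable lebesgue (\<lambda>x. (u x)\<^sup>2)"

definition weak_deriv :: "(real \<Rightarrow> real) \<Rightarrow> (real \<Rightarrow> real) \<Rightarrow> bool" where
  "weak_deriv u g \<longleftrightarrow> L2 g \<and>
     (\<forall>a b. a \<le> b \<longrightarrow> set_integrable lebesgue {a..b} g \<and>
        u b - u a = (LINT x:{a..b}|lebesgue. g x))"

definition H1 :: "(real \<Rightarrow> real) set" where
  "H1 = {u. L2 u \<and> (\<exists>g. weak_deriv u g)}"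

definition H10 :: "real set \<Rightarrow> (real \<Rightarrow> real) set" where
  "H10 G = {u \<in> H1. \<forall>x. x \<notin> G \<longrightarrow> u x = 0}"

definition Dform :: "(real \<Rightarrow> real) \<Rightarrow> (real \<Rightarrow> real) \<Rightarrow> real" where
  "Dform u v = (LINT x|lebesgue. (SOME g. weak_deriv u g) x * (SOME g. weak_deriv v g) x)"

definition s_deriv :: "(real \<Rightarrow> real) \<Rightarrow> (real \<Rightarrow> real) \<Rightarrow> (real \<Rightarrow> real) \<Rightarrow> bool" where
  "s_deriv s u g \<longleftrightarrow> g \<in> borel_measurable borel \<and>
     integrable (interval_measure s) (\<lambda>x. (g x)\<^sup>2) \<and>
     (\<forall>a b. a \<le> b \<longrightarrow> set_integrable (interval_measure s) {a<..b} g \<and>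
        u b - u a = (LINT x:{a<..b}|interval_measure s. g x))"

definition Fs :: "(real \<Rightarrow> real) \<Rightarrow> (real \<Rightarrow> real) set" where
  "Fs s = {u. L2 u \<and> (\<exists>g. s_deriv s u g)}"

definition Es :: "(real \<Rightarrow> real) \<Rightarrow> (real \<Rightarrow> real) \<Rightarrow> (real \<Rightarrow> real) \<Rightarrow> real" where
  "Es s u v = 1/2 * (LINT x|interval_measure s. (SOME g. s_deriv s u g) x * (SOME g. s_deriv s v g) x)"

definition Fs_part :: "(real \<Rightarrow> real) \<Rightarrow> real set \<Rightarrow> (real \<Rightarrow> real) set" where
  "Fs_part s G = {u \<in> Fs s. \<forall>x. x \<notin> G \<longrightarrow> u x = 0}"

end

theory Submission
  imports Defs
begin

text \<open>Since s' is the indicator function of G, the Lebesgue-Stieltjes measure ds is Lebesgue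
  measure restricted to G. Hence an s-derivative g of u yields the ordinary weak derivative
  1_G g, and the s-energy is half the Dirichlet energy on the whole domain of the s-form.
  Conversely, let u in H^1 vanish off G. For a, b outside G every component of G \<inter> (a, b) is
  an open interval whose endpoints lie outside G, where u vanishes, so u' integrates to zero
  over it. Applied to the extreme points of [a, b] - G, this shows that u' integrates to zero
  over [a, b] - G. Therefore u(b) - u(a) is the integral of u' over [a, b] \<inter> G, which is the
  ds-integral of u' over (a, b]: u' is also the s-derivative of u.\<close>

lemma measure_eqI_Ioc:
  fixes M N :: "real measure"
  assumes sets: "sets M = sets borel" "sets N = sets borel"
    and finite: "\<And>a b. a \<le> b \<Longrightarrow> emeasure M {a<..b} \<noteq> \<infinity>"
    and eq: "\<And>a b. a \<le> b \<Longrightarrow> emeasure M {a<..b} = emeasure N {a<..b}"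
  shows "M = N"
proof (rule measure_eqI_generator_eq_countable[of "range (\<lambda>(a, b). {a<..b})" UNIV _ _
      "range (\<lambda>n::nat. {-real n<..real n})"])
  show "Int_stable (range (\<lambda>(a, b). {a<..b::real}))"
    by (auto simp: Int_stable_def image_iff intro!: exI[of _ "(max _ _, min _ _)"])
  show "sets M = sigma_sets UNIV (range (\<lambda>(a, b). {a<..b}))"
    "sets N = sigma_sets UNIV (range (\<lambda>(a, b). {a<..b}))"
    using sets arg_cong[OF borel_sigma_sets_Ioc, of sets] by simp_all
  show "emeasure M X = emeasure N X" if "X \<in> range (\<lambda>(a, b). {a<..b})" for X
    using that eq by (cases "X = {}") (auto simp: not_le)
  show "\<Union> (range (\<lambda>n::nat. {-real n<..real n})) = UNIV"
  proof (intro set_eqI iffI UNIV_I)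
    fix x :: real
    obtain n :: nat where "\<bar>x\<bar> < real n" using reals_Archimedean2 by blast
    then show "x \<in> \<Union> (range (\<lambda>n::nat. {-real n<..real n}))"
      by (auto simp: abs_less_iff intro!: exI[of _ n])
  qed
  show "emeasure M X \<noteq> \<infinity>" if "X \<in> range (\<lambda>n::nat. {-real n<..real n})" for X
    using that finite by auto
qed auto

lemma interval_measure_eq_density_indicator:
  fixes s :: "real \<Rightarrow> real"
  assumes G[measurable]: "G \<in> sets borel"
    and s: "\<And>a b. a \<le> b \<Longrightarrow> s b - s a = measure lebesgue ({a..b} \<inter> G)"
  shows "interval_measure s = density lborel (indicator G)"
proof -
  have increment: "s b - s a = measure lborel ({a<..b} \<inter> G)" if "a \<le> b" for a b
  proof -
    have "measure lborel ({a..b} \<inter> G) = measure lborel ({a<..b} \<inter> G \<union> {a} \<inter> G)"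
      using that by (intro arg_cong[where f = "measure lborel"]) auto
    also have "\<dots> = measure lborel ({a<..b} \<inter> G)"
      by (intro measure_Un_null_set finite_imp_null_set_lborel) auto
    finally have "measure lborel ({a..b} \<inter> G) = measure lborel ({a<..b} \<inter> G)" .
    then show ?thesis using s[OF that] by (simp add: measure_completion)
  qed
  have mono: "s a \<le> s b" if "a \<le> b" for a b
    using increment[OF that] measure_nonneg[of lborel "{a<..b} \<inter> G"] by linarith
  have lipschitz: "s b - s a \<le> b - a" if "a \<le> b" for a b
  proof -
    have "measure lborel ({a<..b} \<inter> G) \<le> measure lborel {a<..b}"
      using that by (intro measure_mono_fmeasurable) (auto simp: fmeasurable_def)
    then show ?thesis using increment[OF that] that by simp
  qed
  have "dist (s x) (s y) \<le> dist x y" for x y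
    using lipschitz[of x y] mono[of x y] lipschitz[of y x] mono[of y x]
    by (cases "x \<le> y") (simp_all add: dist_real_def)
  then have "continuous_on UNIV s"
    by (intro lipschitz_on_continuous_on[of 1]) (simp add: lipschitz_on_def)
  then have right_cont: "continuous (at_right a) s" for a
    by (simp add: continuous_on_eq_continuous_within continuous_at_imp_continuous_at_within)
  show ?thesis
  proof (rule measure_eqI_Ioc)
    fix a b :: real assume "a \<le> b"
    have "emeasure lborel ({a<..b} \<inter> G) \<le> emeasure lborel {a<..b}"
      by (intro emeasure_mono) auto
    then have "emeasure lborel ({a<..b} \<inter> G) = measure lborel ({a<..b} \<inter> G)"
      using \<open>a \<le> b\<close> by (intro emeasure_eq_ennreal_measure) (auto simp: top_unique)
    then show "emeasure (interval_measure s) {a<..b} \<noteq> \<infinity>"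
      "emeasure (interval_measure s) {a<..b} = emeasure (density lborel (indicator G)) {a<..b}"
      using emeasure_interval_measure_Ioc[OF \<open>a \<le> b\<close> mono right_cont] increment[OF \<open>a \<le> b\<close>]
      by (simp_all add: emeasure_restricted Int_commute)
  qed auto
qed

lemma set_integrable_density_indicator:
  fixes f :: "'a \<Rightarrow> real"
  assumes [measurable]: "G \<in> sets M" "A \<in> sets M" "f \<in> borel_measurable M"
  shows "set_integrable (density M (indicator G)) A f \<longleftrightarrow> set_integrable M (A \<inter> G) f"
  using integrable_density[of "\<lambda>x. indicator A x * f x" M "indicator G"]
  by (simp add: set_integrable_def ennreal_indicator indicator_inter_arith ac_simps)

lemma set_integral_density_indicator:
  fixes f :: "'a \<Rightarrow> real"
  assumes [measurable]: "G \<in> sets M" "A \<in> sets M" "f \<in> borel_measurable M"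
  shows "(LINT x:A|density M (indicator G). f x) = (LINT x:A \<inter> G|M. f x)"
  using integral_density[of "\<lambda>x. indicator A x * f x" M "indicator G"]
  by (simp add: set_lebesgue_integral_def ennreal_indicator indicator_inter_arith ac_simps)

lemma set_integrable_mult_indicator_iff:
  fixes f :: "'a \<Rightarrow> real"
  shows "set_integrable M A (\<lambda>x. indicator B x * f x) \<longleftrightarrow> set_integrable M (A \<inter> B) f"
  by (simp add: set_integrable_def indicator_inter_arith mult.assoc)

lemma set_integral_mult_indicator:
  fixes f :: "'a \<Rightarrow> real"
  shows "(LINT x:A|M. indicator B x * f x) = (LINT x:A \<inter> B|M. f x)"
  by (simp add: set_lebesgue_integral_def indicator_inter_arith mult.assoc)

lemma set_integral_Int_Diff:
  fixes g :: "'a \<Rightarrow> real"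
  assumes "set_integrable M A g" "A \<in> sets M" "B \<in> sets M"
  shows "(LINT x:A|M. g x) = (LINT x:A \<inter> B|M. g x) + (LINT x:A - B|M. g x)"
proof -
  have "A \<inter> B \<in> sets M" "A - B \<in> sets M"
    using assms(2,3) by auto
  then have "(LINT x:(A \<inter> B) \<union> (A - B)|M. g x) = (LINT x:A \<inter> B|M. g x) + (LINT x:A - B|M. g x)"
    using set_integrable_subset[OF assms(1)] by (intro set_integral_Un) auto
  moreover have "(A \<inter> B) \<union> (A - B) = A" by blast
  ultimately show ?thesis by simp
qed

lemma integrable_AE_eq_0_if_set_integral_Icc_eq_0:
  fixes f :: "real \<Rightarrow> real"
  assumes f: "integrable lborel f"
    and zero: "\<And>a b. a \<le> b \<Longrightarrow> (LINT x:{a..b}|lborel. f x) = 0"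
  shows "AE x in lborel. f x = 0"
proof (rule density_unique_real[OF f integrable_zero])
  have set_integrable: "set_integrable lborel A f" if "A \<in> sets borel" for A
    using that f unfolding set_integrable_def by (intro integrable_mult_indicator) auto
  fix A :: "real set" assume "A \<in> sets lborel"
  then have "A \<in> sets borel" by simp
  then show "(LINT x:A|lborel. f x) = (LINT x:A|lborel. 0)"
  proof (induction rule: borel_set_induct)
    case empty
    show ?case by (simp add: set_lebesgue_integral_def)
  next
    case (interval a b)
    then show ?case by (simp add: zero)
  next
    case (compl A)
    have "(LINT x:-A|lborel. f x) = (LINT x:UNIV|lborel. f x) - (LINT x:A|lborel. f x)"
      using set_integral_Un[of A "-A" lborel f] set_integrable compl(1)
      by (simp add: Un_commute)
    also have "(LINT x:UNIV|lborel. f x) = 0"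
    proof -
      have "(\<Union>n::nat. {-real n..real n}) = UNIV"
      proof (intro set_eqI iffI UNIV_I)
        fix x :: real
        obtain n :: nat where "\<bar>x\<bar> \<le> real n" using real_arch_simple by blast
        then show "x \<in> (\<Union>n::nat. {-real n..real n})"
          by (auto simp: abs_le_iff intro!: exI[of _ n])
      qed
      moreover have "(\<lambda>n::nat. LINT x:{-real n..real n}|lborel. f x)
          \<longlonglongrightarrow> (LINT x:(\<Union>n. {-real n..real n})|lborel. f x)"
        using set_integrable by (intro set_integral_cont_up) (auto simp: incseq_def)
      ultimately show ?thesis
        using zero by (simp add: LIMSEQ_const_iff)
    qed
    finally show ?case using compl(2) by simp
  next
    case (union F)
    have "(LINT x:(\<Union>i. F i)|lborel. f x) = (\<Sum>i. LINT x:F i|lborel. f x)"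
      using union(1,2) set_integrable[of "\<Union>i. F i"]
      by (intro lebesgue_integral_countable_add) (auto simp: disjoint_family_on_def)
    then show ?case using union(3) by simp
  qed
qed

lemma AE_eq_0_if_set_integral_Icc_eq_0:
  fixes f :: "real \<Rightarrow> real"
  assumes integrable: "\<And>a b. a \<le> b \<Longrightarrow> set_integrable lborel {a..b} f"
    and zero: "\<And>a b. a \<le> b \<Longrightarrow> (LINT x:{a..b}|lborel. f x) = 0"
  shows "AE x in lborel. f x = 0"
proof -
  have truncated: "AE x in lborel. indicator {-real n..real n} x * f x = 0" for n :: nat
  proof (rule integrable_AE_eq_0_if_set_integral_Icc_eq_0)
    show "integrable lborel (\<lambda>x. indicator {-real n..real n} x * f x)"
      using integrable[of "-real n" "real n"] by (simp add: set_integrable_def)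
    fix a b :: real
    have "(LINT x:{a..b}|lborel. indicator {-real n..real n} x * f x) =
        (LINT x:{a..b} \<inter> {-real n..real n}|lborel. f x)"
      unfolding set_lebesgue_integral_def
      by (intro Bochner_Integration.integral_cong) (auto split: split_indicator)
    also have "\<dots> = 0"
    proof (cases "max a (-real n) \<le> min b (real n)")
      case True
      have "{a..b} \<inter> {-real n..real n} = {max a (-real n)..min b (real n)}" by auto
      then show ?thesis using zero[OF True] by simp
    qed (simp add: set_lebesgue_integral_def)
    finally show "(LINT x:{a..b}|lborel. indicator {-real n..real n} x * f x) = 0" .
  qed
  have "AE x in lborel. \<forall>n::nat. indicator {-real n..real n} x * f x = 0"
    using truncated by (subst AE_all_countable) blast
  then show ?thesis
  proof eventually_elim
    case (elim x)
    obtain n :: nat where "\<bar>x\<bar> \<le> real n" using real_arch_simple by blast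
    then show "f x = 0" using elim[rule_format, of n] by (simp add: abs_le_iff)
  qed
qed

lemma open_connected_bdd_real_eq_Ioo:
  fixes C :: "real set"
  assumes "open C" "connected C" "C \<noteq> {}" and bdd: "bdd_below C" "bdd_above C"
  shows "C = {Inf C<..<Sup C}"
proof -
  have "Inf C \<notin> C"
  proof
    assume "Inf C \<in> C"
    then obtain e where "e > 0" "ball (Inf C) e \<subseteq> C"
      using \<open>open C\<close> open_contains_ball by blast
    then have "Inf C - e/2 \<in> C" by (auto simp: dist_real_def)
    then show False using cInf_lower[OF _ bdd(1)] \<open>e > 0\<close> by force
  qed
  moreover have "Sup C \<notin> C"
  proof
    assume "Sup C \<in> C"
    then obtain e where "e > 0" "ball (Sup C) e \<subseteq> C"
      using \<open>open C\<close> open_contains_ball by blast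
    then have "Sup C + e/2 \<in> C" by (auto simp: dist_real_def)
    then show False using cSup_upper[OF _ bdd(2)] \<open>e > 0\<close> by force
  qed
  moreover have "{Inf C<..<Sup C} \<subseteq> C"
  proof
    fix x assume x: "x \<in> {Inf C<..<Sup C}"
    obtain y z where "y \<in> C" "y < x" "z \<in> C" "x < z"
      using x \<open>C \<noteq> {}\<close> bdd by (auto simp: cInf_less_iff less_cSup_iff)
    then show "x \<in> C"
      using \<open>connected C\<close> unfolding is_interval_connected_1[symmetric] is_interval_1
      by (meson less_imp_le)
  qed
  ultimately show ?thesis
    using cInf_lower[OF _ bdd(1)] cSup_upper[OF _ bdd(2)] by (force simp: order_le_less)
qed

lemma component_of_open_subset_Ioo:
  fixes S :: "real set"
  assumes "open S" "S \<subseteq> {a<..<b}" "C \<in> components S"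
  obtains c d where "c < d" "C = {c<..<d}" "c \<notin> S" "d \<notin> S" "a \<le> c" "d \<le> b"
proof -
  have C: "open C" "connected C" "C \<noteq> {}" "C \<subseteq> {a<..<b}"
    using open_components[OF assms(1,3)] in_components_connected[OF assms(3)]
      in_components_nonempty[OF assms(3)] in_components_subset[OF assms(3)] assms(2)
    by auto
  have "bdd_below C" by (rule bdd_belowI[of _ a]) (use C(4) in auto)
  have "bdd_above C" by (rule bdd_aboveI[of _ b]) (use C(4) in auto)
  define c d where "c = Inf C" and "d = Sup C"
  have C_eq: "C = {c<..<d}"
    unfolding c_def d_def using C \<open>bdd_below C\<close> \<open>bdd_above C\<close>
    by (intro open_connected_bdd_real_eq_Ioo)
  then have "c < d" using \<open>C \<noteq> {}\<close> by auto
  have endpoint_notin: "p \<notin> S" if "p \<in> {c, d}" for p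
  proof
    assume "p \<in> S"
    have "closure C = {c..d}"
      unfolding C_eq using \<open>c < d\<close> by (rule closure_greaterThanLessThan)
    then have "insert p C \<subseteq> closure C"
      using that \<open>c < d\<close> C_eq by auto
    then have "connected (insert p C)"
      using connected_intermediate_closure[OF \<open>connected C\<close>] by blast
    moreover have "insert p C \<subseteq> S"
      using \<open>p \<in> S\<close> in_components_subset[OF assms(3)] by blast
    ultimately have "insert p C \<subseteq> C"
      using components_maximal[OF assms(3)] C(3) by blast
    then show False using that C_eq by fastforce
  qed
  have "a \<le> c" unfolding c_def by (rule cInf_greatest) (use C(3,4) in auto)
  have "d \<le> b" unfolding d_def by (rule cSup_least) (use C(3,4) in auto)
  show ?thesis
    using endpoint_notin by (intro that[OF \<open>c < d\<close> C_eq _ _ \<open>a \<le> c\<close> \<open>d \<le> b\<close>]) auto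
qed

lemma set_integral_countable_Union_eq_0:
  fixes f :: "'a \<Rightarrow> real"
  assumes "countable \<C>" "disjoint \<C>" "\<C> \<subseteq> sets M" "set_integrable M (\<Union>\<C>) f"
    and zero: "\<And>C. C \<in> \<C> \<Longrightarrow> (LINT x:C|M. f x) = 0"
  shows "(LINT x:\<Union>\<C>|M. f x) = 0"
proof -
  \<comment> \<open>An injective enumeration of \<C>, padded with empty sets.\<close>
  define A where "A i = (if i \<in> to_nat_on \<C> ` \<C> then from_nat_into \<C> i else {})" for i
  have A_index: "A (to_nat_on \<C> C) = C" if "C \<in> \<C>" for C
    using that \<open>countable \<C>\<close> by (simp add: A_def from_nat_into_to_nat_on)
  have A_cases: "A i \<in> \<C> \<or> A i = {}" for i
    using A_index by (auto simp: A_def)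
  have Union_A: "(\<Union>i. A i) = \<Union>\<C>"
    using A_cases A_index by (fastforce intro: UN_I[of "to_nat_on \<C> _"])
  have "A i \<inter> A j = {}" if "i \<noteq> j" for i j
  proof (cases "A i = {} \<or> A j = {}")
    case False
    then obtain C D where "C \<in> \<C>" "D \<in> \<C>" "i = to_nat_on \<C> C" "j = to_nat_on \<C> D"
      by (auto simp: A_def split: if_splits)
    moreover from this have "C \<noteq> D" using that by blast
    ultimately show ?thesis
      using A_index pairwiseD[OF \<open>disjoint \<C>\<close>] by (simp add: disjnt_def)
  qed auto
  moreover have "A i \<in> sets M" for i
    using A_cases[of i] assms(3) by auto
  ultimately have "(LINT x:\<Union>i. A i|M. f x) = (\<Sum>i. LINT x:A i|M. f x)"
    using assms(4) Union_A by (intro lebesgue_integral_countable_add) auto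
  also have "\<dots> = 0"
  proof -
    have "(LINT x:A i|M. f x) = 0" for i
      using A_cases[of i] zero by (auto simp: set_lebesgue_integral_def)
    then show ?thesis by simp
  qed
  finally show ?thesis using Union_A by simp
qed

definition is_indefinite_integral :: "(real \<Rightarrow> real) \<Rightarrow> (real \<Rightarrow> real) \<Rightarrow> bool" where
  "is_indefinite_integral u g \<longleftrightarrow> g \<in> borel_measurable borel \<and>
     (\<forall>a b. a \<le> b \<longrightarrow> set_integrable lborel {a..b} g \<and> u b - u a = (LINT x:{a..b}|lborel. g x))"

lemma set_integral_Icc_Int_eq_0:
  assumes u: "is_indefinite_integral u g" and "open G"
    and vanish: "\<And>x. x \<notin> G \<Longrightarrow> u x = 0"
    and "a \<le> b" "a \<notin> G" "b \<notin> G"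
  shows "(LINT x:{a..b} \<inter> G|lborel. g x) = 0"
proof -
  define S where "S = G \<inter> {a<..<b}"
  have "open S" "S \<subseteq> {a<..<b}" using \<open>open G\<close> by (auto simp: S_def)
  have S_eq: "{a..b} \<inter> G = S" using \<open>a \<notin> G\<close> \<open>b \<notin> G\<close> by (auto simp: S_def less_le)
  \<comment> \<open>Each component of S is an interval with endpoints outside G, where u vanishes.\<close>
  have "(LINT x:C|lborel. g x) = 0" if C: "C \<in> components S" for C
  proof -
    obtain c d where "c < d" "C = {c<..<d}" "c \<notin> S" "d \<notin> S" "a \<le> c" "d \<le> b"
      using component_of_open_subset_Ioo[OF \<open>open S\<close> \<open>S \<subseteq> {a<..<b}\<close> C] by blast
    moreover from this have "c \<notin> G" "d \<notin> G"
      using \<open>a \<notin> G\<close> \<open>b \<notin> G\<close> by (auto simp: S_def less_le)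
    ultimately have "(LINT x:C|lborel. g x) = (LINT x:{c..d}|lborel. g x)"
      by (intro set_integral_discrete_difference[of "{c, d}"]) auto
    also have "\<dots> = u d - u c"
      using u \<open>c < d\<close> by (simp add: is_indefinite_integral_def)
    finally show ?thesis using vanish \<open>c \<notin> G\<close> \<open>d \<notin> G\<close> by simp
  qed
  moreover have "set_integrable lborel S g"
  proof (rule set_integrable_subset)
    show "set_integrable lborel {a..b} g"
      using u \<open>a \<le> b\<close> by (simp add: is_indefinite_integral_def)
  qed (use borel_open[OF \<open>open S\<close>] in \<open>auto simp: S_def\<close>)
  moreover have "disjoint (components S)"
    unfolding pairwise_def disjnt_def using components_nonoverlap by blast
  moreover have "countable (components S)"
    using open_components[OF \<open>open S\<close>] \<open>disjoint (components S)\<close>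
    by (intro countable_disjoint_open_subsets) auto
  ultimately have "(LINT x:\<Union>(components S)|lborel. g x) = 0"
    using open_components[OF \<open>open S\<close>]
    by (intro set_integral_countable_Union_eq_0) auto
  then show ?thesis using S_eq by simp
qed

lemma indefinite_integral_eq_set_integral_Int_open:
  assumes u: "is_indefinite_integral u g" and "open G"
    and vanish: "\<And>x. x \<notin> G \<Longrightarrow> u x = 0" and "a \<le> b"
  shows "u b - u a = (LINT x:{a..b} \<inter> G|lborel. g x)"
proof -
  have G: "G \<in> sets lborel" using \<open>open G\<close> by simp
  have on_Icc: "set_integrable lborel {a..b} g" "u b - u a = (LINT x:{a..b}|lborel. g x)"
    if "a \<le> b" for a b
    using u that by (auto simp: is_indefinite_integral_def)
  have "(LINT x:{a..b} - G|lborel. g x) = 0"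
  proof (cases "{a..b} - G = {}")
    case True
    then show ?thesis by (simp only:) (simp add: set_lebesgue_integral_def)
  next
    case False
    \<comment> \<open>The extreme points of T lie outside G, so the previous lemma applies between them.\<close>
    define T where "T = {a..b} - G"
    have "closed T" "T \<noteq> {}" using \<open>open G\<close> False by (auto simp: T_def)
    moreover have "bdd_below T" "bdd_above T"
      by (auto simp: T_def intro: bdd_belowI[of _ a] bdd_aboveI[of _ b])
    ultimately have "Inf T \<in> T" "Sup T \<in> T" "T \<subseteq> {Inf T..Sup T}"
      by (auto intro: closed_contains_Inf closed_contains_Sup cInf_lower cSup_upper)
    then have T_eq: "T = {Inf T..Sup T} - G" "Inf T \<le> Sup T"
      by (fastforce simp: T_def)+
    have "0 = (LINT x:{Inf T..Sup T}|lborel. g x)"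
      using on_Icc(2)[OF T_eq(2)] vanish \<open>Inf T \<in> T\<close> \<open>Sup T \<in> T\<close> by (simp add: T_def)
    also have "\<dots> = (LINT x:{Inf T..Sup T} \<inter> G|lborel. g x) + (LINT x:T|lborel. g x)"
      using set_integral_Int_Diff[OF on_Icc(1)[OF T_eq(2)] _ G] T_eq(1) by simp
    also have "(LINT x:{Inf T..Sup T} \<inter> G|lborel. g x) = 0"
      using \<open>Inf T \<in> T\<close> \<open>Sup T \<in> T\<close> T_eq(2)
      by (intro set_integral_Icc_Int_eq_0[OF u \<open>open G\<close> vanish]) (auto simp: T_def)
    finally show ?thesis by (simp add: T_def)
  qed
  then show ?thesis
    using on_Icc[OF \<open>a \<le> b\<close>] set_integral_Int_Diff[OF on_Icc(1)[OF \<open>a \<le> b\<close>] _ G] by simp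
qed

lemma indefinite_integral_unique:
  assumes g1: "is_indefinite_integral u g1" and g2: "is_indefinite_integral u g2"
  shows "AE x in lborel. g1 x = g2 x"
proof -
  have "AE x in lborel. g1 x - g2 x = 0"
  proof (rule AE_eq_0_if_set_integral_Icc_eq_0)
    fix a b :: real assume "a \<le> b"
    then have "set_integrable lborel {a..b} g1" "set_integrable lborel {a..b} g2"
      "(LINT x:{a..b}|lborel. g1 x) = (LINT x:{a..b}|lborel. g2 x)"
      using g1 g2 by (auto simp: is_indefinite_integral_def)
    then show "set_integrable lborel {a..b} (\<lambda>x. g1 x - g2 x)"
      "(LINT x:{a..b}|lborel. g1 x - g2 x) = 0"
      by (simp_all add: set_integral_diff)
  qed
  then show ?thesis by simp
qed

lemma weak_deriv_iff_indefinite_integral: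
  assumes [measurable]: "g \<in> borel_measurable borel"
  shows "weak_deriv u g \<longleftrightarrow> is_indefinite_integral u g \<and> integrable lborel (\<lambda>x. (g x)\<^sup>2)"
  by (auto simp: weak_deriv_def L2_def is_indefinite_integral_def set_integrable_def
      set_lebesgue_integral_def integrable_completion integral_completion intro: measurable_completion)

lemma weak_deriv_cong_AE:
  assumes h: "weak_deriv u h" and g: "g \<in> borel_measurable lebesgue"
    and ae: "AE x in lebesgue. h x = g x"
  shows "weak_deriv u g"
proof -
  have h_meas: "h \<in> borel_measurable lebesgue" using h by (simp add: weak_deriv_def L2_def)
  have "integrable lebesgue (\<lambda>x. (g x)\<^sup>2)"
    using h g ae by (auto simp: weak_deriv_def L2_def elim!: integrable_cong_AE_imp AE_mp)
  moreover have "set_integrable lebesgue {a..b} g"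
    "(LINT x:{a..b}|lebesgue. h x) = (LINT x:{a..b}|lebesgue. g x)" if "a \<le> b" for a b
  proof -
    have ae_Icc: "AE x \<in> {a..b} in lebesgue. h x = g x" using ae by eventually_elim simp
    have "{a..b} \<in> sets lebesgue" by simp
    note cong = set_integrable_cong_AE[OF h_meas g ae_Icc this]
      set_lebesgue_integral_cong_AE[OF this h_meas g ae_Icc]
    show "set_integrable lebesgue {a..b} g"
      using h that unfolding cong(1)[symmetric] weak_deriv_def by blast
    show "(LINT x:{a..b}|lebesgue. h x) = (LINT x:{a..b}|lebesgue. g x)"
      by (rule cong(2))
  qed
  ultimately show ?thesis
    using h g by (auto simp: weak_deriv_def L2_def)
qed

lemma weak_deriv_imp_indefinite_integral:
  assumes "weak_deriv u h"
  obtains g where "is_indefinite_integral u g" "integrable lborel (\<lambda>x. (g x)\<^sup>2)"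
    "AE x in lebesgue. h x = g x"
proof -
  have "h \<in> borel_measurable lebesgue" using assms by (simp add: weak_deriv_def L2_def)
  then obtain g where g_lborel: "g \<in> borel_measurable lborel"
    and ae_lborel: "AE x in lborel. h x = g x"
    using completion_ex_borel_measurable_real by blast
  from ae_lborel have ae: "AE x in lebesgue. h x = g x" by (rule AE_completion)
  have g: "g \<in> borel_measurable borel" using g_lborel by simp
  have "weak_deriv u g"
    using g_lborel by (intro weak_deriv_cong_AE[OF assms _ ae] measurable_completion)
  then have "is_indefinite_integral u g" "integrable lborel (\<lambda>x. (g x)\<^sup>2)"
    by (simp_all add: weak_deriv_iff_indefinite_integral[OF g])
  then show ?thesis by (rule that[OF _ _ ae])
qed

lemma weak_deriv_unique:
  assumes "weak_deriv u h1" "weak_deriv u h2"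
  shows "AE x in lebesgue. h1 x = h2 x"
proof -
  obtain g1 g2 where g1: "is_indefinite_integral u g1" "AE x in lebesgue. h1 x = g1 x"
    and g2: "is_indefinite_integral u g2" "AE x in lebesgue. h2 x = g2 x"
    using weak_deriv_imp_indefinite_integral assms by metis
  have "AE x in lebesgue. g1 x = g2 x"
    using g1(1) g2(1) by (intro AE_completion indefinite_integral_unique)
  with g1(2) g2(2) show ?thesis by eventually_elim simp
qed

lemma s_deriv_imp_weak_deriv:
  assumes ds: "interval_measure s = density lborel (indicator G)"
    and G[measurable]: "G \<in> sets borel" and u: "s_deriv s u g"
  shows "weak_deriv u (\<lambda>x. indicator G x * g x)"
proof -
  have [measurable]: "g \<in> borel_measurable borel"
    and "integrable (interval_measure s) (\<lambda>x. (g x)\<^sup>2)"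
    and on_Ioc: "\<And>a b. a \<le> b \<Longrightarrow> set_integrable (interval_measure s) {a<..b} g \<and>
        u b - u a = (LINT x:{a<..b}|interval_measure s. g x)"
    using u by (auto simp: s_deriv_def)
  then have "set_integrable lborel G (\<lambda>x. (g x)\<^sup>2)"
    using set_integrable_density_indicator[of G lborel UNIV "\<lambda>x. (g x)\<^sup>2"]
    by (simp add: ds set_integrable_def)
  moreover have "(\<lambda>x. (indicator G x * g x)\<^sup>2) = (\<lambda>x. indicator G x *\<^sub>R (g x)\<^sup>2)"
    by (auto split: split_indicator)
  ultimately have "integrable lborel (\<lambda>x. (indicator G x * g x)\<^sup>2)"
    by (simp add: set_integrable_def)
  moreover have "is_indefinite_integral u (\<lambda>x. indicator G x * g x)"
    unfolding is_indefinite_integral_def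
  proof (intro conjI allI impI)
    fix a b :: real assume "a \<le> b"
    have "set_integrable lborel ({a - 1<..b} \<inter> G) g"
      using on_Ioc[of "a - 1" b] \<open>a \<le> b\<close>
      by (simp add: ds set_integrable_density_indicator)
    then show "set_integrable lborel {a..b} (\<lambda>x. indicator G x * g x)"
      unfolding set_integrable_mult_indicator_iff by (rule set_integrable_subset) auto
    have "u b - u a = (LINT x:{a<..b} \<inter> G|lborel. g x)"
      using on_Ioc[OF \<open>a \<le> b\<close>] by (simp add: ds set_integral_density_indicator)
    also have "\<dots> = (LINT x:{a..b} \<inter> G|lborel. g x)"
      by (rule set_integral_discrete_difference[of "{a}"]) auto
    finally show "u b - u a = (LINT x:{a..b}|lborel. indicator G x * g x)"
      by (simp add: set_integral_mult_indicator)
  qed simp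
  ultimately show ?thesis by (simp add: weak_deriv_iff_indefinite_integral)
qed

lemma weak_deriv_vanishing_outside_imp_s_deriv:
  assumes ds: "interval_measure s = density lborel (indicator G)" and "open G"
    and vanish: "\<And>x. x \<notin> G \<Longrightarrow> u x = 0" and "weak_deriv u h"
  shows "\<exists>g. s_deriv s u g"
proof -
  have G[measurable]: "G \<in> sets borel" using \<open>open G\<close> by simp
  obtain g where u: "is_indefinite_integral u g" and "integrable lborel (\<lambda>x. (g x)\<^sup>2)"
    using weak_deriv_imp_indefinite_integral[OF \<open>weak_deriv u h\<close>] by blast
  then have g[measurable]: "g \<in> borel_measurable borel"
    and on_Icc: "\<And>a b. a \<le> b \<Longrightarrow> set_integrable lborel {a..b} g"
    by (auto simp: is_indefinite_integral_def)
  have "s_deriv s u g"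
    unfolding s_deriv_def
  proof (intro conjI allI impI g)
    show "integrable (interval_measure s) (\<lambda>x. (g x)\<^sup>2)"
      using set_integrable_density_indicator[of G lborel UNIV "\<lambda>x. (g x)\<^sup>2"]
        set_integrable_subset[of lborel UNIV "\<lambda>x. (g x)\<^sup>2" G] \<open>integrable lborel _\<close>
      by (simp add: ds set_integrable_def)
    fix a b :: real assume "a \<le> b"
    show "set_integrable (interval_measure s) {a<..b} g"
      using set_integrable_subset[OF on_Icc[OF \<open>a \<le> b\<close>], of "{a<..b} \<inter> G"]
      by (simp add: ds set_integrable_density_indicator subset_eq)
    have "u b - u a = (LINT x:{a..b} \<inter> G|lborel. g x)"
      using indefinite_integral_eq_set_integral_Int_open[OF u \<open>open G\<close> vanish \<open>a \<le> b\<close>] .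
    also have "\<dots> = (LINT x:{a<..b} \<inter> G|lborel. g x)"
      by (rule set_integral_discrete_difference[of "{a}"]) auto
    finally show "u b - u a = (LINT x:{a<..b}|interval_measure s. g x)"
      by (simp add: ds set_integral_density_indicator)
  qed
  then show ?thesis by blast
qed

lemma Fs_part_eq_H10:
  assumes ds: "interval_measure s = density lborel (indicator G)" and "open G"
  shows "Fs_part s G = H10 G"
  using s_deriv_imp_weak_deriv[OF ds] weak_deriv_vanishing_outside_imp_s_deriv[OF ds \<open>open G\<close>]
    borel_open[OF \<open>open G\<close>]
  unfolding Fs_part_def H10_def Fs_def H1_def by blast

lemma Es_eq_Dform:
  assumes ds: "interval_measure s = density lborel (indicator G)"
    and G[measurable]: "G \<in> sets borel" and "u \<in> Fs s" "v \<in> Fs s"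
  shows "Es s u v = 1/2 * Dform u v"
proof -
  define gu gv hu hv where "gu = (SOME g. s_deriv s u g)" and "gv = (SOME g. s_deriv s v g)"
    and "hu = (SOME g. weak_deriv u g)" and "hv = (SOME g. weak_deriv v g)"
  have ex: "\<exists>g. s_deriv s u g" "\<exists>g. s_deriv s v g"
    using assms(3,4) by (auto simp: Fs_def)
  have "s_deriv s u gu" "s_deriv s v gv"
    unfolding gu_def gv_def using someI_ex[OF ex(1)] someI_ex[OF ex(2)] by auto
  then have wu: "weak_deriv u (\<lambda>x. indicator G x * gu x)"
    and wv: "weak_deriv v (\<lambda>x. indicator G x * gv x)"
    and [measurable]: "gu \<in> borel_measurable borel" "gv \<in> borel_measurable borel"
    using s_deriv_imp_weak_deriv[OF ds G] by (auto simp: s_deriv_def)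
  have "weak_deriv u hu" "weak_deriv v hv"
    unfolding hu_def hv_def using someI[of "weak_deriv u", OF wu] someI[of "weak_deriv v", OF wv]
    by auto
  then have "hu \<in> borel_measurable lebesgue" "hv \<in> borel_measurable lebesgue"
    by (simp_all add: weak_deriv_def L2_def)
  have ae: "AE x in lebesgue. hu x * hv x = indicator G x * (gu x * gv x)"
    using weak_deriv_unique[OF \<open>weak_deriv u hu\<close> wu] weak_deriv_unique[OF \<open>weak_deriv v hv\<close> wv]
    by eventually_elim (auto split: split_indicator)
  have "Es s u v = 1/2 * (LINT x:G|lborel. gu x * gv x)"
    using set_integral_density_indicator[of G lborel UNIV "\<lambda>x. gu x * gv x"]
    by (simp add: Es_def ds gu_def[symmetric] gv_def[symmetric] set_lebesgue_integral_def)
  also have "(LINT x:G|lborel. gu x * gv x) = (LINT x|lebesgue. indicator G x * (gu x * gv x))"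
    by (simp add: set_lebesgue_integral_def integral_completion)
  also have "\<dots> = (LINT x|lebesgue. hu x * hv x)"
    using ae \<open>hu \<in> _\<close> \<open>hv \<in> _\<close>
    by (intro integral_cong_AE) (auto intro: measurable_completion elim: AE_mp)
  finally show ?thesis by (simp add: Dform_def hu_def hv_def)
qed

theorem mainTheorem2:
  fixes s :: "real \<Rightarrow> real" and G :: "real set"
  assumes "strict_mono s"
    and "\<And>a b. a \<le> b \<Longrightarrow> s b - s a = measure lebesgue ({a..b} \<inter> G)"
    and "open G"
    and "emeasure lebesgue (- G) > 0"
    and "\<And>x. x \<in> - G \<Longrightarrow> x islimpt (- G)"
  shows "Fs_part s G = H10 G \<and>
         (\<forall>u \<in> Fs_part s G. \<forall>v \<in> Fs_part s G. Es s u v = 1/2 * Dform u v)"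
proof -
  have ds: "interval_measure s = density lborel (indicator G)"
    using assms(2,3) by (intro interval_measure_eq_density_indicator) auto
  have "Es s u v = 1/2 * Dform u v" if "u \<in> Fs_part s G" "v \<in> Fs_part s G" for u v
    using that assms(3) by (intro Es_eq_Dform[OF ds]) (auto simp: Fs_part_def)
  then show ?thesis using Fs_part_eq_H10[OF ds assms(3)] by blast
qed

end
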